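(* Let $h:\{0,1\}^*\to\{0,1\}^*$ be the morphism defined by $h(0)=0110100110110010110$ and $h(1)=1001011001001101001$. (a) If $h(ab)=t\,h(c)\,u$ for some letters $a,b,c\in\{0,1\}$ and words $t,u\in\{0,1\}^*$, then $t=\epsilon$ or $u=\epsilon$. (b) If there exist letters $a,b,c\in\{0,1\}$ and words $s,t,u,v\in\{0,1\}^*$ such that $h(a)=st$, $h(b)=uv$ and $h(c)=sv$, then $a=c$ or $b=c$.
   Context: $\epsilon$ denotes the empty word. *)

theory Defs
  imports Main
begin

text \<open>Binary alphabet {0,1} rendered as bool: False = 0, True = 1.
  Words are lists of letters; the empty word is [].\<close>

definition w01 :: "string \<Rightarrow> bool list" where
  "w01 s = map (\<lambda>c. c = CHR ''1'') s"

definition h_letter :: "bool \<Rightarrow> bool list" where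
  "h_letter a = (if a then w01 ''1001011001001101001'' else w01 ''0110100110110010110'')"

definition h :: "bool list \<Rightarrow> bool list" where
  "h w = concat (map h_letter w)"

end

theory Submission
  imports Defs
begin

text \<open>Both parts are finite problems. A factorisation as in (a) or (b) is determined by the
  offset \<open>|t|\<close> resp. \<open>|s|\<close>, which is at most 19 because the two images of the letters have
  length 19. So it suffices to compare, for each of the 20 offsets and all choices of letters,
  the corresponding factors of the images, which the simplifier does by evaluation.\<close>

lemma h_singleton [simp]: "h [a] = h_letter a"
  by (simp add: h_def)

lemma h_pair [simp]: "h [a, b] = h_letter a @ h_letter b"
  by (simp add: h_def)

lemma length_h_letter [simp]: "length (h_letter a) = 19"
  by (cases a) (simp_all add: h_letter_def w01_def)

lemma h_letter_occurs_only_at_borders: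
  assumes "take 19 (drop k (h_letter a @ h_letter b)) = h_letter c"
  shows "k = 0 \<or> k = 19"
proof -
  have "k < 20"
    using arg_cong [OF assms, of length] by simp
  moreover have "\<forall>k \<in> set [0..<20].
      take 19 (drop k (h_letter a @ h_letter b)) = h_letter c \<longrightarrow> k = 0 \<or> k = 19"
    by (cases a; cases b; cases c) (simp_all add: h_letter_def w01_def upt_rec)
  ultimately show ?thesis
    using assms by simp
qed

lemma h_letter_prefix_suffix_splice:
  assumes "take k (h_letter a) = take k (h_letter c)"
    and "drop k (h_letter b) = drop k (h_letter c)"
  shows "a = c \<or> b = c"
proof (cases "k < 20")
  case True
  moreover have "\<forall>k \<in> set [0..<20]. take k (h_letter a) = take k (h_letter c)
      \<and> drop k (h_letter b) = drop k (h_letter c) \<longrightarrow> a = c \<or> b = c"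
    by (cases a; cases b; cases c) (simp_all add: h_letter_def w01_def upt_rec)
  ultimately show ?thesis
    using assms by auto
next
  case False
  then have "h_letter a = h_letter c"
    using assms(1) by simp
  then show ?thesis
    by (cases a; cases c) (simp_all add: h_letter_def w01_def)
qed

lemma h_image_not_inner_factor:
  assumes "h [a, b] = t @ h [c] @ u"
  shows "t = [] \<or> u = []"
proof -
  have lengths: "length t + length u = 19"
    using arg_cong [OF assms, of length] by simp
  have "take 19 (drop (length t) (h_letter a @ h_letter b)) = h_letter c"
    using assms by simp
  then have "length t = 0 \<or> length t = 19"
    by (rule h_letter_occurs_only_at_borders)
  with lengths show ?thesis
    by auto
qed

lemma h_image_splice:
  assumes "h [a] = s @ t" and "h [b] = u @ v" and "h [c] = s @ v"
  shows "a = c \<or> b = c"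
proof (rule h_letter_prefix_suffix_splice)
  show "take (length s) (h_letter a) = take (length s) (h_letter c)"
    using assms(1,3) by simp
  have "length u = length s"
    using arg_cong [OF assms(2), of length] arg_cong [OF assms(3), of length] by simp
  then show "drop (length s) (h_letter b) = drop (length s) (h_letter c)"
    using assms(2,3) by simp
qed

theorem lemma12:
  shows "(\<forall>(a::bool) b c (t::bool list) u. h [a, b] = t @ h [c] @ u \<longrightarrow> t = [] \<or> u = [])
     \<and> (\<forall>(a::bool) b c (s::bool list) t u v.
           h [a] = s @ t \<and> h [b] = u @ v \<and> h [c] = s @ v \<longrightarrow> a = c \<or> b = c)"
  using h_image_not_inner_factor h_image_splice by blast

end
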